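(* For a finite rooted tree $T$ whose nodes $v$ carry labels $\ell(v)\in\mathbb{N}=\{1,2,\dots\}$, let $p_i$ denote the $i$-th prime, let $n_v$ be the number of vertices in the subtree $T_v$ rooted at $v$, and define $C_v(x)\in\mathbb{Z}[x]$ inductively by $C_v(x)=x+p_{\ell(v)}$ if $v$ is a leaf and $C_v(x)=x^{n_v}+p_{\ell(v)}\,x\prod_{u\text{ child of }v}C_u(x)+p_{\ell(v)}$ if $v$ is internal. Let $r$ be the root of $T$. Then $C_r(x)$ is a complete invariant for rooted labelled trees: for any two such labelled rooted trees $T$ (root $r$) and $T'$ (root $r'$), $C_r(x)=C_{r'}(x)$ if and only if there is an isomorphism of rooted trees from $T$ to $T'$ preserving labels.
   Context: An isomorphism of rooted labelled trees is a graph isomorphism mapping root to root and each node to a node with the same label. $T_v$ consists of $v$ and all its descendants. *)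

theory Defs
  imports "HOL-Computational_Algebra.Computational_Algebra" "HOL-Library.Infinite_Set"
begin

text \<open>Finite rooted labelled trees: a node carries a label and the list of its child subtrees.
  The order of the list is irrelevant for isomorphism (see ltree_iso).\<close>
datatype ltree = Node (label: nat) (children: "ltree list")

fun labels_pos :: "ltree \<Rightarrow> bool" where
  "labels_pos (Node l cs) = (1 \<le> l \<and> (\<forall>c\<in>set cs. labels_pos c))"

text \<open>The i-th prime, 1-indexed: nth_prime 1 = 2, nth_prime 2 = 3, ...\<close>
definition nth_prime :: "nat \<Rightarrow> nat" where
  "nth_prime i = enumerate {p::nat. prime p} (i - 1)"

fun nverts :: "ltree \<Rightarrow> nat" where
  "nverts (Node l cs) = 1 + sum_list (map nverts cs)"

fun Cpoly :: "ltree \<Rightarrow> int poly" where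
  "Cpoly (Node l cs) =
     (if cs = [] then [:int (nth_prime l), 1:]
      else monom 1 (nverts (Node l cs))
           + smult (int (nth_prime l)) (monom 1 1 * prod_list (map Cpoly cs))
           + [:int (nth_prime l):])"

text \<open>For trees this is exactly a root-preserving,
  label-preserving graph isomorphism.\<close>
inductive ltree_iso :: "ltree \<Rightarrow> ltree \<Rightarrow> bool" where
  "bij_betw f {..<length cs} {..<length ds} \<Longrightarrow>
   (\<forall>i<length cs. ltree_iso (cs ! i) (ds ! f i)) \<Longrightarrow>
   ltree_iso (Node l cs) (Node l ds)"

end

theory Submission
  imports Defs "HOL-Combinatorics.Permutations" "HOL-Number_Theory.Cong"
begin

(*
  With p = p_{l(v)}, every C_v is an Eisenstein polynomial at p: its constant term is p, all
  coefficients below the top one are multiples of p, and the leading coefficient is 1 modulo p.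
  Having content 1 and positive leading coefficient, C_v is therefore a prime element of Z[x].
  Hence C_r determines l(r) (via C_r(0)) and, by unique factorisation of the product of the
  children's polynomials, the multiset of the children's polynomials; induction on the tree
  turns equality of these multisets into a matching of isomorphic subtrees.
*)

lemma mset_map_eq_iff_bij_betw_nth:
  "mset (map g xs) = mset (map g ys) \<longleftrightarrow>
     (\<exists>f. bij_betw f {..<length xs} {..<length ys} \<and> (\<forall>i<length xs. g (xs ! i) = g (ys ! f i)))"
proof
  assume "mset (map g xs) = mset (map g ys)"
  then obtain p where p: "p permutes {..<length ys}" "permute_list p (map g ys) = map g xs"
    by (rule mset_eq_permutation) simp
  then have "length xs = length ys"
    by (metis length_map length_permute_list)
  moreover have "g (xs ! i) = g (ys ! p i)" if "i < length xs" for i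
    using p that \<open>length xs = length ys\<close>
    by (metis nth_map permute_list_nth permutes_in_image lessThan_iff length_map)
  ultimately show "\<exists>f. bij_betw f {..<length xs} {..<length ys} \<and> (\<forall>i<length xs. g (xs ! i) = g (ys ! f i))"
    using p by (intro exI[of _ p]) (auto simp: permutes_imp_bij)
next
  assume "\<exists>f. bij_betw f {..<length xs} {..<length ys} \<and> (\<forall>i<length xs. g (xs ! i) = g (ys ! f i))"
  then obtain f where f: "bij_betw f {..<length xs} {..<length ys}"
    and nth: "\<forall>i<length xs. g (xs ! i) = g (ys ! f i)" by blast
  have mset_map_nth: "mset (map g zs) = image_mset (\<lambda>i. g (zs ! i)) (mset_set {..<length zs})" for zs
  proof -
    have "map g zs = map (\<lambda>i. g (zs ! i)) [0..<length zs]"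
      by (rule nth_equalityI) simp_all
    then show ?thesis
      by (simp only: mset_map mset_set_upto_eq_mset_upto)
  qed
  have "mset (map g xs) = image_mset ((\<lambda>j. g (ys ! j)) \<circ> f) (mset_set {..<length xs})"
    unfolding mset_map_nth using nth by (intro image_mset_cong) auto
  also have "\<dots> = image_mset (\<lambda>j. g (ys ! j)) (mset_set (f ` {..<length xs}))"
    using f by (simp add: bij_betw_def image_mset_mset_set flip: image_mset.comp)
  also have "\<dots> = mset (map g ys)"
    unfolding mset_map_nth using f by (simp add: bij_betw_def)
  finally show "mset (map g xs) = mset (map g ys)" .
qed

lemma degree_prod_list_eq:
  fixes ps :: "'a::idom poly list"
  assumes "0 \<notin> set ps"
  shows "degree (prod_list ps) = sum_list (map degree ps)"
  using assms by (induction ps) (auto simp: degree_mult_eq prod_list_zero_iff)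

lemma lead_coeff_prod_list:
  fixes ps :: "'a::idom poly list"
  shows "lead_coeff (prod_list ps) = prod_list (map lead_coeff ps)"
  by (induction ps) (simp_all add: lead_coeff_mult)

lemma degree_eq_0_if_prime_elem_dvd_lower_coeffs:
  fixes a b :: "'a::idom poly"
  assumes q: "prime_elem q"
    and low: "\<forall>i<degree (a * b). q dvd coeff (a * b) i"
    and lead: "\<not> q dvd lead_coeff a" and const: "\<not> q dvd coeff b 0"
  shows "degree b = 0"
proof -
  define k where "k = (LEAST k. \<not> q dvd coeff a k)"
  have k: "\<not> q dvd coeff a k" "k \<le> degree a"
    unfolding k_def by (rule LeastI[of _ "degree a"] Least_le, rule lead)+
  have below_k: "q dvd coeff a i" if "i < k" for i
    using that not_less_Least unfolding k_def by blast
  have "coeff (a * b) k = (\<Sum>i<k. coeff a i * coeff b (k - i)) + coeff a k * coeff b 0"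
    by (simp add: coeff_mult lessThan_Suc_atMost[symmetric])
  moreover have "q dvd (\<Sum>i<k. coeff a i * coeff b (k - i))"
    by (intro dvd_sum) (simp add: below_k)
  moreover have "\<not> q dvd coeff a k * coeff b 0"
    using q k(1) const prime_elem_dvd_mult_iff by blast
  ultimately have "\<not> q dvd coeff (a * b) k"
    by (simp add: dvd_add_right_iff)
  with low have "degree (a * b) \<le> k"
    by (meson not_le)
  moreover have "degree (a * b) = degree a + degree b"
    using lead const by (intro degree_mult_eq) auto
  ultimately show ?thesis
    using k(2) by linarith
qed

lemma irreducible_Eisenstein:
  fixes P :: "'a::factorial_ring_gcd poly"
  assumes q: "prime_elem q" and "degree P > 0" and "content P = 1"
    and low: "\<forall>i<degree P. q dvd coeff P i"
    and lead: "\<not> q dvd lead_coeff P" and const: "\<not> q^2 dvd coeff P 0"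
  shows "irreducible P"
proof (rule irreducibleI)
  show "P \<noteq> 0" "\<not> is_unit P"
    using \<open>degree P > 0\<close> by (auto simp: is_unit_poly_iff)
  have constant_factor_is_unit: "is_unit a" if "a dvd P" "degree a = 0" for a
  proof -
    from \<open>degree a = 0\<close> obtain c where a: "a = [:c:]"
      by (rule degree_eq_zeroE)
    with \<open>a dvd P\<close> \<open>content P = 1\<close> have "is_unit c"
      by (simp add: const_poly_dvd_iff_dvd_content)
    with a show ?thesis
      by (simp add: is_unit_const_poly_iff)
  qed
  fix a b assume P: "P = a * b"
  have "\<not> q dvd lead_coeff a" "\<not> q dvd lead_coeff b"
    using lead by (auto simp: P lead_coeff_mult)
  moreover have "\<not> q dvd coeff a 0 \<or> \<not> q dvd coeff b 0"
    using const by (auto simp: P coeff_mult power2_eq_square mult_dvd_mono)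
  ultimately have "degree b = 0 \<or> degree a = 0"
    using degree_eq_0_if_prime_elem_dvd_lower_coeffs[OF q, of a b]
      degree_eq_0_if_prime_elem_dvd_lower_coeffs[OF q, of b a] low
    by (auto simp: P mult.commute)
  then show "is_unit a \<or> is_unit b"
    using constant_factor_is_unit by (auto simp: P)
qed

lemma prime_nth_prime: "prime (nth_prime i)"
  unfolding nth_prime_def using enumerate_in_set[OF primes_infinite] by blast

(* Not injective on all of nat: nth_prime 0 = nth_prime 1 because i - 1 truncates. *)
lemma inj_on_nth_prime: "inj_on nth_prime {1..}"
  unfolding inj_on_def nth_prime_def
  using strict_mono_eq[OF strict_mono_enumerate[OF primes_infinite]] by fastforce

lemma prime_int_nth_prime: "prime (int (nth_prime i))"
  by (simp add: prime_nth_prime)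

lemma nverts_pos [simp]: "nverts t > 0"
  by (cases t) simp

lemma nverts_Node_eq_1_iff: "nverts (Node l cs) = 1 \<longleftrightarrow> cs = []"
  by (cases cs) auto

lemma leaf_or_inner_node [case_names leaf inner]:
  obtains l where "t = Node l []" | l cs where "t = Node l cs" "cs \<noteq> []"
  by (cases t) auto

declare Cpoly.simps [simp del]

lemma Cpoly_leaf [simp]: "Cpoly (Node l []) = [:int (nth_prime l), 1:]"
  by (simp add: Cpoly.simps)

lemma coeff_Cpoly_Node:
  assumes "cs \<noteq> []"
  shows "coeff (Cpoly (Node l cs)) i =
    of_bool (i = nverts (Node l cs)) +
    int (nth_prime l) * (if i = 0 then 1 else coeff (prod_list (map Cpoly cs)) (i - 1))"
  using assms by (auto simp: Cpoly.simps coeff_monom coeff_monom_mult coeff_pCons split: nat.split)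

lemma coeff_0_Cpoly: "coeff (Cpoly t) 0 = int (nth_prime (label t))"
  by (cases t rule: leaf_or_inner_node) (simp_all add: coeff_Cpoly_Node)

lemma coeff_Cpoly_nverts_cong: "[coeff (Cpoly t) (nverts t) = 1] (mod int (nth_prime (label t)))"
  by (cases t rule: leaf_or_inner_node) (simp_all add: coeff_Cpoly_Node cong_def)

lemma nth_prime_dvd_coeff_Cpoly:
  assumes "i < nverts t"
  shows "int (nth_prime (label t)) dvd coeff (Cpoly t) i"
  using assms by (cases t rule: leaf_or_inner_node) (simp_all add: coeff_Cpoly_Node)

lemma degree_Cpoly_le: "degree (Cpoly t) \<le> nverts t"
proof (induction t)
  case (Node l cs)
  show ?case
  proof (cases "cs = []")
    case False
    have "degree (prod_list (map Cpoly cs)) \<le> sum_list (map (degree \<circ> Cpoly) cs)"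
      using degree_prod_list_le[of "map Cpoly cs"] by simp
    also have "\<dots> \<le> sum_list (map nverts cs)"
      using Node.IH by (intro sum_list_mono) simp
    finally show ?thesis
      using False by (intro degree_le) (auto simp: coeff_Cpoly_Node coeff_eq_0)
  qed simp
qed

lemma degree_Cpoly: "degree (Cpoly t) = nverts t"
proof -
  have "coeff (Cpoly t) (nverts t) \<noteq> 0"
  proof
    assume "coeff (Cpoly t) (nverts t) = 0"
    with coeff_Cpoly_nverts_cong[of t] have "int (nth_prime (label t)) dvd 1"
      by (simp add: cong_0_iff cong_sym_eq)
    with prime_int_nth_prime show False
      by (metis not_prime_unit)
  qed
  then show ?thesis
    using degree_Cpoly_le le_degree by (metis antisym)
qed

lemma Cpoly_nonzero: "Cpoly t \<noteq> 0"
  using degree_Cpoly by (metis degree_0 nverts_pos less_irrefl)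

lemma degree_prod_list_Cpoly: "degree (prod_list (map Cpoly ts)) = sum_list (map nverts ts)"
  by (subst degree_prod_list_eq) (auto simp: Cpoly_nonzero degree_Cpoly o_def)

lemma lead_coeff_Cpoly_cong: "[lead_coeff (Cpoly t) = 1] (mod int (nth_prime (label t)))"
  using coeff_Cpoly_nverts_cong by (simp add: degree_Cpoly)

lemma lead_coeff_Cpoly_pos: "lead_coeff (Cpoly t) > 0"
proof (induction t)
  case (Node l cs)
  show ?case
  proof (cases "cs = []")
    case False
    have "lead_coeff (Cpoly (Node l cs)) =
        1 + int (nth_prime l) * lead_coeff (prod_list (map Cpoly cs))"
      using False by (simp add: degree_Cpoly coeff_Cpoly_Node degree_prod_list_Cpoly)
    moreover have "lead_coeff (prod_list (map Cpoly cs)) \<ge> 0"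
      unfolding lead_coeff_prod_list by (rule prod_list_nonneg) (auto intro: less_imp_le Node.IH)
    ultimately show ?thesis
      by (simp add: add_pos_nonneg)
  qed simp
qed

lemma content_Cpoly: "content (Cpoly t) = 1"
proof -
  have "content (Cpoly t) dvd int (nth_prime (label t))"
    using content_dvd_coeff[of "Cpoly t" 0] by (simp add: coeff_0_Cpoly)
  then have "[lead_coeff (Cpoly t) = 1] (mod content (Cpoly t))"
    by (rule cong_dvd_modulus[OF lead_coeff_Cpoly_cong])
  then have "is_unit (content (Cpoly t))"
    using content_dvd_coeff cong_dvd_iff by blast
  then show ?thesis
    by (simp only: is_unit_content_iff)
qed

lemma prime_Cpoly: "prime (Cpoly t)"
proof -
  let ?p = "int (nth_prime (label t))"
  have "\<not> ?p dvd 1"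
    using prime_int_nth_prime not_prime_unit by blast
  then have "\<not> ?p dvd lead_coeff (Cpoly t)" "\<not> ?p^2 dvd coeff (Cpoly t) 0"
    using lead_coeff_Cpoly_cong[of t] prime_int_nth_prime[of "label t"]
    by (auto simp: cong_dvd_iff coeff_0_Cpoly power2_eq_square)
  then have "irreducible (Cpoly t)"
    using prime_int_nth_prime content_Cpoly nth_prime_dvd_coeff_Cpoly
    by (intro irreducible_Eisenstein[where q = ?p]) (auto simp: degree_Cpoly)
  moreover have "normalize (Cpoly t) = Cpoly t"
    using lead_coeff_Cpoly_pos[of t] by (simp add: normalize_poly_def pCons_one)
  ultimately show ?thesis
    by (simp add: prime_def prime_elem_iff_irreducible)
qed

lemma prod_list_Cpoly_eq_iff:
  "prod_list (map Cpoly ts) = prod_list (map Cpoly us) \<longleftrightarrow> mset (map Cpoly ts) = mset (map Cpoly us)"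
proof -
  have "prime_factorization (prod_mset (mset (map Cpoly ts))) = mset (map Cpoly ts)" for ts
    by (rule prime_factorization_prod_mset_primes) (auto simp: prime_Cpoly)
  then show ?thesis
    by (metis prod_mset_prod_list)
qed

lemma Cpoly_Node_eq_iff:
  assumes "l \<ge> 1" "l' \<ge> 1"
  shows "Cpoly (Node l cs) = Cpoly (Node l' ds) \<longleftrightarrow>
    l = l' \<and> mset (map Cpoly cs) = mset (map Cpoly ds)"
proof
  assume eq: "Cpoly (Node l cs) = Cpoly (Node l' ds)"
  then have "nth_prime l = nth_prime l'"
    using coeff_0_Cpoly by (metis ltree.sel(1) of_nat_eq_iff)
  with assms have l: "l = l'"
    using inj_on_nth_prime by (auto dest: inj_onD)
  have nverts: "nverts (Node l cs) = nverts (Node l ds)"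
    using eq degree_Cpoly l by metis
  then have "cs = [] \<longleftrightarrow> ds = []"
    by (metis nverts_Node_eq_1_iff)
  moreover have "prod_list (map Cpoly cs) = prod_list (map Cpoly ds)" if "cs \<noteq> []"
  proof -
    from eq that nverts \<open>cs = [] \<longleftrightarrow> ds = []\<close> have
      "smult (int (nth_prime l)) (monom 1 1 * prod_list (map Cpoly cs)) =
       smult (int (nth_prime l)) (monom 1 1 * prod_list (map Cpoly ds))"
      by (simp add: Cpoly.simps l)
    moreover have "int (nth_prime l) \<noteq> 0"
      using prime_nth_prime[of l] by auto
    ultimately show ?thesis
      by (metis smult_cancel mult_cancel_left monom_eq_0_iff one_neq_zero)
  qed
  ultimately show "l = l' \<and> mset (map Cpoly cs) = mset (map Cpoly ds)"
    using l prod_list_Cpoly_eq_iff by blast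
next
  assume "l = l' \<and> mset (map Cpoly cs) = mset (map Cpoly ds)"
  then have l: "l = l'" and prod: "prod_list (map Cpoly cs) = prod_list (map Cpoly ds)"
    using prod_list_Cpoly_eq_iff by blast+
  then have nverts: "nverts (Node l cs) = nverts (Node l' ds)"
    by (metis degree_prod_list_Cpoly nverts.simps)
  then have "cs = [] \<longleftrightarrow> ds = []"
    by (metis nverts_Node_eq_1_iff)
  with l prod nverts show "Cpoly (Node l cs) = Cpoly (Node l' ds)"
    by (simp add: Cpoly.simps)
qed

theorem mainTheorem5:
  fixes T T' :: ltree
  assumes "labels_pos T" and "labels_pos T'"
  shows "Cpoly T = Cpoly T' \<longleftrightarrow> ltree_iso T T'"
  using assms
proof (induction T arbitrary: T')
  case (Node l cs)
  obtain l' ds where T': "T' = Node l' ds"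
    by (cases T')
  have labels: "l \<ge> 1" "l' \<ge> 1" "\<forall>c\<in>set cs. labels_pos c" "\<forall>d\<in>set ds. labels_pos d"
    using Node.prems T' by auto
  have children: "Cpoly (cs ! i) = Cpoly (ds ! f i) \<longleftrightarrow> ltree_iso (cs ! i) (ds ! f i)"
    if "bij_betw f {..<length cs} {..<length ds}" "i < length cs" for f i
    using Node.IH labels that bij_betw_apply[OF that(1)] by simp
  show ?case
    unfolding T' Cpoly_Node_eq_iff[OF labels(1,2)] mset_map_eq_iff_bij_betw_nth ltree_iso.simps[of "Node l cs"]
    using children by auto
qed

end
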